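(* Let $G$ be a perfect matching on $n=pq$ vertices $u_iw_j$ ($1\le i\le p$, $1\le j\le q$; $n$ even). Then $\Delta(G)=\Delta(G^{\Gamma_B})$ if and only if $G^{\Gamma_B}$ is a perfect matching. Moreover, if this holds, then the subgraph $G_2$ of $G$ consisting of its entangled edges and the subgraph $G_4$ of $G^{\Gamma_B}$ consisting of its entangled edges have the same set of non-isolated vertices, i.e. both are perfect entangling matchings on the same vertex subset. In particular, a perfect entangling matching $G$ on these vertices satisfies $\Delta(G)=\Delta(G^{\Gamma_B})$ iff $G^{\Gamma_B}$ is also a perfect entangling matching.
   Context: A perfect matching is a simple graph in which every vertex lies in exactly one edge. An edge $\{u_iw_j,u_{i'}w_{j'}\}$ is entangled if $i\ne i'$ and $j\ne j'$, and unentangled otherwise. A perfect entangling matching (on a vertex set) is a perfect matching all of whose edges are entangled. $\Delta(G)$ denotes the diagonal degree matrix. The partial transpose $G^{\Gamma_B}$ has the same vertex set, and $\{u_iw_j,u_kw_l\}$ is an edge of $G^{\Gamma_B}$ iff $\{u_iw_l,u_kw_j\}$ is an edge of $G$. *)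

theory Defs
  imports Main
begin

text \<open>Vertices u_i w_j are encoded as pairs (i,j) with 1 <= i <= p, 1 <= j <= q.
  A graph is given by its edge relation E (symmetric, irreflexive, inside the vertex set).\<close>

type_synonym vtx = "nat \<times> nat"
type_synonym graph = "vtx \<Rightarrow> vtx \<Rightarrow> bool"

definition verts :: "nat \<Rightarrow> nat \<Rightarrow> vtx set" where
  "verts p q = {1..p} \<times> {1..q}"

definition simple_graph :: "vtx set \<Rightarrow> graph \<Rightarrow> bool" where
  "simple_graph V E \<longleftrightarrow>
     (\<forall>v w. E v w \<longrightarrow> v \<in> V \<and> w \<in> V \<and> v \<noteq> w \<and> E w v)"

definition perfect_matching :: "vtx set \<Rightarrow> graph \<Rightarrow> bool" where
  "perfect_matching V E \<longleftrightarrow> simple_graph V E \<and> (\<forall>v\<in>V. \<exists>!w. E v w)"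

definition entangled :: "vtx \<Rightarrow> vtx \<Rightarrow> bool" where
  "entangled v w \<longleftrightarrow> fst v \<noteq> fst w \<and> snd v \<noteq> snd w"

definition perfect_entangling_matching :: "vtx set \<Rightarrow> graph \<Rightarrow> bool" where
  "perfect_entangling_matching V E \<longleftrightarrow>
     perfect_matching V E \<and> (\<forall>v w. E v w \<longrightarrow> entangled v w)"

definition partial_transpose :: "graph \<Rightarrow> graph" where
  "partial_transpose E = (\<lambda>(i, j) (k, l). E (i, l) (k, j))"

definition degree :: "vtx set \<Rightarrow> graph \<Rightarrow> vtx \<Rightarrow> nat" where
  "degree V E v = card {w \<in> V. E v w}"

definition degree_matrix :: "vtx set \<Rightarrow> graph \<Rightarrow> vtx \<Rightarrow> vtx \<Rightarrow> nat" where
  "degree_matrix V E v w = (if v \<in> V \<and> w \<in> V \<and> v = w then degree V E v else 0)"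

definition entangled_part :: "graph \<Rightarrow> graph" where
  "entangled_part E = (\<lambda>v w. E v w \<and> entangled v w)"

definition non_isolated :: "vtx set \<Rightarrow> graph \<Rightarrow> vtx set" where
  "non_isolated V E = {v \<in> V. \<exists>w. E v w}"

end

theory Submission
  imports Defs
begin

text \<open>A vertex has degree 1 in G exactly when it lies in a single edge, so for a perfect matching G
  the equation \<open>\<Delta>(G) = \<Delta>(G\<^sup>\<Gamma>)\<close> says that every vertex has degree 1 in the simple graph
  \<open>G\<^sup>\<Gamma>\<close>, i.e. that \<open>G\<^sup>\<Gamma>\<close> is a perfect matching. The partial transpose fixes every unentangled
  pair, so whenever the unique partner of a vertex is unentangled in one of the two matchings, it
  is its partner in the other one as well; hence a vertex has an entangled partner in G iff it
  has one in \<open>G\<^sup>\<Gamma>\<close>. Finally, swapping the second coordinates of the endpoints of an edge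
  preserves entanglement, so \<open>G\<^sup>\<Gamma>\<close> is entangling whenever G is.\<close>

lemma simple_graph_partial_transpose:
  assumes "simple_graph (A \<times> B) G"
  shows "simple_graph (A \<times> B) (partial_transpose G)"
  using assms unfolding simple_graph_def partial_transpose_def by fastforce

lemma partial_transpose_unentangled:
  assumes "simple_graph V G" and "\<not> entangled v w"
  shows "partial_transpose G v w = G v w"
  using assms unfolding simple_graph_def entangled_def partial_transpose_def
  by (cases v; cases w) auto

lemma entangled_part_partial_transpose:
  "entangled_part (partial_transpose G) = partial_transpose (entangled_part G)"
  unfolding entangled_part_def partial_transpose_def entangled_def by (auto simp: fun_eq_iff)

lemma perfect_entangling_matching_iff:
  "perfect_entangling_matching V G \<longleftrightarrow> perfect_matching V G \<and> entangled_part G = G"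
  unfolding perfect_entangling_matching_def entangled_part_def by (auto simp: fun_eq_iff)

lemma degree_eq_1_iff:
  assumes "simple_graph V G"
  shows "degree V G v = 1 \<longleftrightarrow> (\<exists>!w. G v w)"
proof -
  have "{w \<in> V. G v w} = {w. G v w}"
    using assms unfolding simple_graph_def by blast
  then show ?thesis
    unfolding degree_def is_singleton_altdef[symmetric] is_singleton_iff_ex1 by simp
qed

lemma perfect_matching_iff_degree_eq_1:
  "perfect_matching V G \<longleftrightarrow> simple_graph V G \<and> (\<forall>v\<in>V. degree V G v = 1)"
  unfolding perfect_matching_def using degree_eq_1_iff by blast

lemma degree_matrix_eq_iff:
  "degree_matrix V G = degree_matrix V H \<longleftrightarrow> (\<forall>v\<in>V. degree V G v = degree V H v)"
proof
  assume "degree_matrix V G = degree_matrix V H"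
  then show "\<forall>v\<in>V. degree V G v = degree V H v"
    unfolding degree_matrix_def by (metis (full_types))
qed (auto simp: degree_matrix_def fun_eq_iff)

lemma degree_matrix_eq_iff_perfect_matching:
  assumes "perfect_matching V G" and "simple_graph V H"
  shows "degree_matrix V G = degree_matrix V H \<longleftrightarrow> perfect_matching V H"
  using assms unfolding degree_matrix_eq_iff perfect_matching_iff_degree_eq_1 by auto

lemma non_isolated_entangled_part_subset:
  assumes G: "perfect_matching V G" and H: "perfect_matching V H"
    and agree: "\<And>v w. H v w \<Longrightarrow> \<not> entangled v w \<Longrightarrow> G v w"
  shows "non_isolated V (entangled_part G) \<subseteq> non_isolated V (entangled_part H)"
proof
  fix v assume "v \<in> non_isolated V (entangled_part G)"
  then obtain a where v: "v \<in> V" and "G v a" and "entangled v a"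
    unfolding non_isolated_def entangled_part_def by blast
  obtain c where "H v c"
    using H v unfolding perfect_matching_def by blast
  have "entangled v c"
  proof (rule ccontr)
    assume "\<not> entangled v c"
    with \<open>H v c\<close> have "G v c" by (rule agree)
    with \<open>G v a\<close> G v have "c = a" unfolding perfect_matching_def by blast
    with \<open>entangled v a\<close> \<open>\<not> entangled v c\<close> show False by simp
  qed
  with v \<open>H v c\<close> show "v \<in> non_isolated V (entangled_part H)"
    unfolding non_isolated_def entangled_part_def by blast
qed

lemma non_isolated_entangled_part_eq:
  assumes "perfect_matching V G" and "perfect_matching V H"
    and "\<And>v w. \<not> entangled v w \<Longrightarrow> G v w = H v w"
  shows "non_isolated V (entangled_part G) = non_isolated V (entangled_part H)"
  using non_isolated_entangled_part_subset[of V G H] non_isolated_entangled_part_subset[of V H G]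
    assms by blast

theorem mainTheorem6:
  fixes p q :: nat and G :: graph
  assumes "even (p * q)"
    and "perfect_matching (verts p q) G"
  shows "(degree_matrix (verts p q) G = degree_matrix (verts p q) (partial_transpose G)
            \<longleftrightarrow> perfect_matching (verts p q) (partial_transpose G))
       \<and> (degree_matrix (verts p q) G = degree_matrix (verts p q) (partial_transpose G)
            \<longrightarrow> non_isolated (verts p q) (entangled_part G)
                = non_isolated (verts p q) (entangled_part (partial_transpose G)))
       \<and> (perfect_entangling_matching (verts p q) G \<longrightarrow>
            (degree_matrix (verts p q) G = degree_matrix (verts p q) (partial_transpose G)
             \<longleftrightarrow> perfect_entangling_matching (verts p q) (partial_transpose G)))"
proof -
  let ?V = "verts p q" and ?H = "partial_transpose G"
  have simple_G: "simple_graph ?V G"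
    using assms(2) unfolding perfect_matching_def by blast
  then have "simple_graph ?V ?H"
    unfolding verts_def by (rule simple_graph_partial_transpose)
  with assms(2) have degree: "degree_matrix ?V G = degree_matrix ?V ?H \<longleftrightarrow> perfect_matching ?V ?H"
    by (rule degree_matrix_eq_iff_perfect_matching)
  have "non_isolated ?V (entangled_part G) = non_isolated ?V (entangled_part ?H)"
    if "perfect_matching ?V ?H"
    using assms(2) that partial_transpose_unentangled[OF simple_G]
    by (intro non_isolated_entangled_part_eq) auto
  moreover have "entangled_part ?H = ?H" if "entangled_part G = G"
    using that by (simp add: entangled_part_partial_transpose)
  ultimately show ?thesis
    using degree unfolding perfect_entangling_matching_iff by blast
qed

end
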